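(* Let $d^{AB}_n$ denote the number of signed derangements $\sigma\in B_n$ with $\ell_B(\sigma)$ even. Then: (i) for $n\ge 1$, $d^{AB}_n=n!\sum_{k=0}^{n-1}\frac{2^{n-k-1}(-1)^k}{k!}+(-1)^n$; (ii) for $n\ge 2$, $d^{AB}_n=2n\,d^{AB}_{n-1}+(-1)^n(n+1)$, with $d^{AB}_1=0$; (iii) for $n\ge 3$, $d^{AB}_n=(n-1)\big(2d^{AB}_{n-1}+4d^{AB}_{n-2}+(-1)^{n-1}\big)$, with $d^{AB}_1=0$, $d^{AB}_2=3$.
   Context: $B_n$ is the hyperoctahedral group: its elements are words $\sigma=\sigma_1\cdots\sigma_n$ with $\sigma_i\in\{\pm1,\dots,\pm n\}$ such that $|\sigma_1|\cdots|\sigma_n|$ is a permutation of $[n]$. A (signed) derangement is an element with $\sigma_i\ne i$ for all $i$. $\mathrm{inv}(\sigma)=\#\{(i,j):i<j,\ \sigma_i>\sigma_j\}$ with respect to the usual order of integers, and the length is $\ell_B(\sigma)=\mathrm{inv}(\sigma)-\sum_{i:\sigma_i<0}\sigma_i$. *)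

theory Defs
  imports Complex_Main
begin

text \<open>Elements of B_n as words sigma_1 ... sigma_n, represented as functions
  nat => int that are 0 outside the positions {1..n}, and such that
  |sigma_1| ... |sigma_n| is a permutation of {1..n}.\<close>
definition signed_perms :: "nat \<Rightarrow> (nat \<Rightarrow> int) set" where
  "signed_perms n = {\<sigma>. (\<forall>i. i \<notin> {1..n} \<longrightarrow> \<sigma> i = 0) \<and>
      bij_betw (\<lambda>i. nat \<bar>\<sigma> i\<bar>) {1..n} {1..n}}"

definition signed_derangement :: "nat \<Rightarrow> (nat \<Rightarrow> int) \<Rightarrow> bool" where
  "signed_derangement n \<sigma> \<longleftrightarrow> (\<forall>i\<in>{1..n}. \<sigma> i \<noteq> int i)"

definition inv_B :: "nat \<Rightarrow> (nat \<Rightarrow> int) \<Rightarrow> nat" where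
  "inv_B n \<sigma> = card {(i, j). i \<in> {1..n} \<and> j \<in> {1..n} \<and> i < j \<and> \<sigma> i > \<sigma> j}"

definition length_B :: "nat \<Rightarrow> (nat \<Rightarrow> int) \<Rightarrow> int" where
  "length_B n \<sigma> = int (inv_B n \<sigma>) - (\<Sum>i\<in>{i\<in>{1..n}. \<sigma> i < 0}. \<sigma> i)"

definition dAB :: "nat \<Rightarrow> nat" where
  "dAB n = card {\<sigma> \<in> signed_perms n. signed_derangement n \<sigma> \<and> even (length_B n \<sigma>)}"

end

theory Submission
  imports Defs "HOL-Combinatorics.Permutations"
begin

text \<open>Negating one entry \<open>\<sigma> i\<close> of a signed permutation changes the parity of its length:
  the pairs whose inversion status changes are exactly the pairs of \<open>i\<close> with the
  \<open>|\<sigma> i| - 1\<close> positions of smaller absolute value, and the sum of the negative entries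
  changes by \<open>\<sigma> i\<close>. So among the \<open>2\<^sup>k k!\<close> signed permutations moving only points
  of a fixed nonempty \<open>k\<close>-set exactly half have even length. Moebius inversion over the set
  of moved points then gives \<open>d\<^sub>n = \<Sum>\<^sub>k (n choose k) (-1)\<^bsup>n-k\<^esup> 2\<^bsup>k-1\<^esup> k!\<close>, which is (i)
  after substituting \<open>k = n - j\<close>; (ii) and (iii) follow from (i) by algebra.\<close>

lemma signed_perms_bij:
  "\<sigma> \<in> signed_perms n \<Longrightarrow> bij_betw (\<lambda>i. nat \<bar>\<sigma> i\<bar>) {1..n} {1..n}"
  by (simp add: signed_perms_def)

lemma signed_perms_abs_mem:
  assumes "\<sigma> \<in> signed_perms n" "i \<in> {1..n}"
  shows "nat \<bar>\<sigma> i\<bar> \<in> {1..n}"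
  using bij_betw_apply[OF signed_perms_bij[OF assms(1)] assms(2)] .

lemma signed_perms_nonzero:
  assumes "\<sigma> \<in> signed_perms n" "i \<in> {1..n}"
  shows "\<sigma> i \<noteq> 0"
  using signed_perms_abs_mem[OF assms] by auto

lemma signed_perms_abs_inj:
  assumes "\<sigma> \<in> signed_perms n" "i \<in> {1..n}" "j \<in> {1..n}" "\<bar>\<sigma> i\<bar> = \<bar>\<sigma> j\<bar>"
  shows "i = j"
proof -
  have "nat \<bar>\<sigma> i\<bar> = nat \<bar>\<sigma> j\<bar>"
    using assms(4) by simp
  then show ?thesis
    using inj_onD[OF bij_betw_imp_inj_on[OF signed_perms_bij[OF assms(1)]]] assms(2,3) by blast
qed

definition signed_perm_of :: "nat \<Rightarrow> (nat \<Rightarrow> nat) \<Rightarrow> nat set \<Rightarrow> nat \<Rightarrow> int" where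
  "signed_perm_of n p N i = (if i \<in> {1..n} then (if i \<in> N then - int (p i) else int (p i)) else 0)"

lemma abs_signed_perm_of:
  "i \<in> {1..n} \<Longrightarrow> nat \<bar>signed_perm_of n p N i\<bar> = p i"
  by (simp add: signed_perm_of_def)

lemma signed_perm_of_negative_iff:
  assumes "p permutes {1..n}" "i \<in> {1..n}"
  shows "signed_perm_of n p N i < 0 \<longleftrightarrow> i \<in> N"
  using permutes_in_image[OF assms(1), of i] assms(2) by (simp add: signed_perm_of_def)

lemma signed_perm_of_in_signed_perms:
  assumes "p permutes {1..n}"
  shows "signed_perm_of n p N \<in> signed_perms n"
proof -
  have "bij_betw (\<lambda>i. nat \<bar>signed_perm_of n p N i\<bar>) {1..n} {1..n} = bij_betw p {1..n} {1..n}"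
    by (rule bij_betw_cong) (simp add: abs_signed_perm_of)
  then show ?thesis
    using permutes_imp_bij[OF assms] by (simp add: signed_perms_def signed_perm_of_def)
qed

lemma signed_perms_eq_signed_perm_of:
  assumes "\<sigma> \<in> signed_perms n"
  obtains p N where "p permutes {1..n}" "N \<subseteq> {1..n}" "\<sigma> = signed_perm_of n p N"
proof
  let ?p = "\<lambda>i. if i \<in> {1..n} then nat \<bar>\<sigma> i\<bar> else i"
  have "bij_betw ?p {1..n} {1..n} = bij_betw (\<lambda>i. nat \<bar>\<sigma> i\<bar>) {1..n} {1..n}"
    by (rule bij_betw_cong) simp
  then have "bij_betw ?p {1..n} {1..n}"
    using signed_perms_bij[OF assms] by blast
  then show "?p permutes {1..n}"
    by (rule bij_imp_permutes) auto
  show "{i \<in> {1..n}. \<sigma> i < 0} \<subseteq> {1..n}"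
    by blast
  show "\<sigma> = signed_perm_of n ?p {i \<in> {1..n}. \<sigma> i < 0}"
    using assms by (auto simp: signed_perm_of_def signed_perms_def)
qed

lemma bij_betw_signed_perm_of:
  "bij_betw (\<lambda>(p, N). signed_perm_of n p N)
     ({p. p permutes {1..n}} \<times> Pow {1..n}) (signed_perms n)"
  unfolding bij_betw_def
proof
  show "inj_on (\<lambda>(p, N). signed_perm_of n p N) ({p. p permutes {1..n}} \<times> Pow {1..n})"
  proof (rule inj_onI, clarify)
    fix p N q M
    assume p: "p permutes {1..n}" and q: "q permutes {1..n}" and "N \<subseteq> {1..n}" "M \<subseteq> {1..n}"
      and eq: "signed_perm_of n p N = signed_perm_of n q M"
    have "p = q"
    proof
      fix i
      show "p i = q i"
        using abs_signed_perm_of[of i n p N] abs_signed_perm_of[of i n q M] eq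
          permutes_not_in[OF p, of i] permutes_not_in[OF q, of i]
        by (cases "i \<in> {1..n}") simp_all
    qed
    moreover have "N = M"
    proof -
      have "i \<in> N \<longleftrightarrow> i \<in> M" if "i \<in> {1..n}" for i
        using signed_perm_of_negative_iff[OF p that, where N = N]
          signed_perm_of_negative_iff[OF q that, where N = M] eq
        by simp
      then show ?thesis
        using \<open>N \<subseteq> {1..n}\<close> \<open>M \<subseteq> {1..n}\<close> by blast
    qed
    ultimately show "p = q \<and> N = M"
      by blast
  qed
  show "(\<lambda>(p, N). signed_perm_of n p N) ` ({p. p permutes {1..n}} \<times> Pow {1..n}) = signed_perms n"
  proof (intro equalityI subsetI)
    fix \<sigma> assume "\<sigma> \<in> (\<lambda>(p, N). signed_perm_of n p N) ` ({p. p permutes {1..n}} \<times> Pow {1..n})"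
    then show "\<sigma> \<in> signed_perms n"
      using signed_perm_of_in_signed_perms by auto
  next
    fix \<sigma> assume "\<sigma> \<in> signed_perms n"
    then obtain p N where "p permutes {1..n}" "N \<subseteq> {1..n}" "\<sigma> = signed_perm_of n p N"
      by (rule signed_perms_eq_signed_perm_of)
    then show "\<sigma> \<in> (\<lambda>(p, N). signed_perm_of n p N) ` ({p. p permutes {1..n}} \<times> Pow {1..n})"
      by (intro image_eqI[where x = "(p, N)"]) simp_all
  qed
qed

lemma finite_signed_perms: "finite (signed_perms n)"
proof -
  have "finite ({p. p permutes {1..n}} \<times> Pow {1..n})"
    by (simp add: finite_permutations)
  then show ?thesis
    using bij_betw_finite[OF bij_betw_signed_perm_of] by blast
qed

definition moved_points :: "nat \<Rightarrow> (nat \<Rightarrow> int) \<Rightarrow> nat set" where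
  "moved_points n \<sigma> = {i \<in> {1..n}. \<sigma> i \<noteq> int i}"

definition signed_perms_on :: "nat \<Rightarrow> nat set \<Rightarrow> (nat \<Rightarrow> int) set" where
  "signed_perms_on n S = {\<sigma> \<in> signed_perms n. moved_points n \<sigma> \<subseteq> S}"

lemma moved_points_signed_perm_of:
  assumes "p permutes {1..n}"
  shows "moved_points n (signed_perm_of n p N) = {i \<in> {1..n}. p i \<noteq> i \<or> i \<in> N}"
  using permutes_in_image[OF assms] by (auto simp: moved_points_def signed_perm_of_def)

lemma moved_points_signed_perm_of_subset_iff:
  assumes p: "p permutes {1..n}" and N: "N \<subseteq> {1..n}"
  shows "moved_points n (signed_perm_of n p N) \<subseteq> S \<longleftrightarrow> p permutes S \<and> N \<subseteq> S"
proof -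
  have "moved_points n (signed_perm_of n p N) \<subseteq> S \<longleftrightarrow>
      (\<forall>i\<in>{1..n}. p i \<noteq> i \<longrightarrow> i \<in> S) \<and> (\<forall>i\<in>{1..n}. i \<in> N \<longrightarrow> i \<in> S)"
    by (auto simp: moved_points_signed_perm_of[OF p])
  also have "(\<forall>i\<in>{1..n}. p i \<noteq> i \<longrightarrow> i \<in> S) \<longleftrightarrow> (\<forall>i. i \<notin> S \<longrightarrow> p i = i)"
    using permutes_not_in[OF p] by blast
  also have "\<dots> \<longleftrightarrow> p permutes S"
    using p by (auto simp: permutes_def)
  also have "(\<forall>i\<in>{1..n}. i \<in> N \<longrightarrow> i \<in> S) \<longleftrightarrow> N \<subseteq> S"
    using N by blast
  finally show ?thesis .
qed

lemma signed_perms_on_eq_image: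
  assumes S: "S \<subseteq> {1..n}"
  shows "signed_perms_on n S = (\<lambda>(p, N). signed_perm_of n p N) ` ({p. p permutes S} \<times> Pow S)"
proof (intro equalityI subsetI)
  fix \<sigma> assume "\<sigma> \<in> signed_perms_on n S"
  then have \<sigma>: "\<sigma> \<in> signed_perms n" "moved_points n \<sigma> \<subseteq> S"
    by (simp_all add: signed_perms_on_def)
  obtain p N where p: "p permutes {1..n}" and N: "N \<subseteq> {1..n}" and "\<sigma> = signed_perm_of n p N"
    using signed_perms_eq_signed_perm_of[OF \<sigma>(1)] .
  moreover have "p permutes S \<and> N \<subseteq> S"
    using \<sigma>(2) moved_points_signed_perm_of_subset_iff[OF p N] \<open>\<sigma> = signed_perm_of n p N\<close> by simp
  ultimately show "\<sigma> \<in> (\<lambda>(p, N). signed_perm_of n p N) ` ({p. p permutes S} \<times> Pow S)"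
    by (intro image_eqI[where x = "(p, N)"]) simp_all
next
  fix \<sigma> assume "\<sigma> \<in> (\<lambda>(p, N). signed_perm_of n p N) ` ({p. p permutes S} \<times> Pow S)"
  then obtain p N where "p permutes S" "N \<subseteq> S" "\<sigma> = signed_perm_of n p N"
    by auto
  moreover have p: "p permutes {1..n}"
    using permutes_subset[OF \<open>p permutes S\<close> S] .
  moreover have N: "N \<subseteq> {1..n}"
    using \<open>N \<subseteq> S\<close> S by blast
  ultimately show "\<sigma> \<in> signed_perms_on n S"
    using moved_points_signed_perm_of_subset_iff[OF p N] signed_perm_of_in_signed_perms[OF p]
    by (simp add: signed_perms_on_def)
qed

lemma card_signed_perms_on:
  assumes S: "S \<subseteq> {1..n}"
  shows "card (signed_perms_on n S) = fact (card S) * 2 ^ card S"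
proof -
  have "{p. p permutes S} \<times> Pow S \<subseteq> {p. p permutes {1..n}} \<times> Pow {1..n}"
    using permutes_subset[OF _ S] S by auto
  then have "inj_on (\<lambda>(p, N). signed_perm_of n p N) ({p. p permutes S} \<times> Pow S)"
    by (rule inj_on_subset[OF bij_betw_imp_inj_on[OF bij_betw_signed_perm_of]])
  then have "card (signed_perms_on n S) = card ({p. p permutes S} \<times> Pow S)"
    by (simp add: signed_perms_on_eq_image[OF S] card_image)
  also have "\<dots> = fact (card S) * 2 ^ card S"
    using finite_subset[OF S] by (simp add: card_cartesian_product card_permutations card_Pow)
  finally show ?thesis .
qed

lemma card_abs_less:
  assumes "\<sigma> \<in> signed_perms n" "i \<in> {1..n}"
  shows "card {j \<in> {1..n}. nat \<bar>\<sigma> j\<bar> < nat \<bar>\<sigma> i\<bar>} = nat \<bar>\<sigma> i\<bar> - 1"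
proof -
  let ?f = "\<lambda>j. nat \<bar>\<sigma> j\<bar>"
  have bij: "bij_betw ?f {1..n} {1..n}"
    using signed_perms_bij[OF assms(1)] .
  have "?f i \<le> n"
    using signed_perms_abs_mem[OF assms] by simp
  then have "{k \<in> {1..n}. k < ?f i} = {1..<?f i}"
    by auto
  moreover have "bij_betw ?f {j \<in> {1..n}. ?f j < ?f i} {k \<in> {1..n}. k < ?f i}"
    by (rule bij_betw_Collect[OF bij]) simp
  ultimately show ?thesis
    by (simp add: bij_betw_same_card)
qed

definition flip_sign :: "nat \<Rightarrow> (nat \<Rightarrow> int) \<Rightarrow> nat \<Rightarrow> int" where
  "flip_sign i \<sigma> = \<sigma>(i := - \<sigma> i)"

lemma flip_sign_flip_sign [simp]: "flip_sign i (flip_sign i \<sigma>) = \<sigma>"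
  by (simp add: flip_sign_def)

lemma flip_sign_in_signed_perms:
  assumes "\<sigma> \<in> signed_perms n" "i \<in> {1..n}"
  shows "flip_sign i \<sigma> \<in> signed_perms n"
proof -
  have "(\<lambda>j. nat \<bar>flip_sign i \<sigma> j\<bar>) = (\<lambda>j. nat \<bar>\<sigma> j\<bar>)"
    by (simp add: flip_sign_def fun_eq_iff)
  then show ?thesis
    using assms by (simp add: signed_perms_def flip_sign_def)
qed

definition inversions :: "nat \<Rightarrow> (nat \<Rightarrow> int) \<Rightarrow> (nat \<times> nat) set" where
  "inversions n \<sigma> = {(i, j). i \<in> {1..n} \<and> j \<in> {1..n} \<and> i < j \<and> \<sigma> i > \<sigma> j}"

lemma inv_B_eq_card_inversions: "inv_B n \<sigma> = card (inversions n \<sigma>)"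
  by (simp add: inv_B_def inversions_def)

lemma finite_inversions: "finite (inversions n \<sigma>)"
  by (rule finite_subset[of _ "{1..n} \<times> {1..n}"]) (auto simp: inversions_def)

lemma inversions_flip_sign_sym_diff:
  assumes \<sigma>: "\<sigma> \<in> signed_perms n" and i: "i \<in> {1..n}"
  shows "(inversions n (flip_sign i \<sigma>) - inversions n \<sigma>) \<union>
      (inversions n \<sigma> - inversions n (flip_sign i \<sigma>))
    = (\<lambda>j. (min i j, max i j)) ` {j \<in> {1..n}. nat \<bar>\<sigma> j\<bar> < nat \<bar>\<sigma> i\<bar>}"
proof -
  have changes: "(flip_sign i \<sigma> a > flip_sign i \<sigma> b) \<noteq> (\<sigma> a > \<sigma> b) \<longleftrightarrow>
      (a = i \<and> \<bar>\<sigma> b\<bar> < \<bar>\<sigma> i\<bar>) \<or> (b = i \<and> \<bar>\<sigma> a\<bar> < \<bar>\<sigma> i\<bar>)"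
    if "a \<in> {1..n}" "b \<in> {1..n}" "a < b" for a b
  proof -
    consider "a = i" | "b = i" | "a \<noteq> i" "b \<noteq> i"
      by blast
    then show ?thesis
    proof cases
      case 1
      then have "\<bar>\<sigma> b\<bar> \<noteq> \<bar>\<sigma> i\<bar>" "\<sigma> b \<noteq> 0"
        using signed_perms_abs_inj[OF \<sigma> that(2) i] signed_perms_nonzero[OF \<sigma> that(2)] that(3)
        by auto
      then show ?thesis
        using 1 that(3) by (auto simp: flip_sign_def)
    next
      case 2
      then have "\<bar>\<sigma> a\<bar> \<noteq> \<bar>\<sigma> i\<bar>" "\<sigma> a \<noteq> 0"
        using signed_perms_abs_inj[OF \<sigma> that(1) i] signed_perms_nonzero[OF \<sigma> that(1)] that(3)
        by auto
      then show ?thesis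
        using 2 that(3) by (auto simp: flip_sign_def)
    next
      case 3
      then show ?thesis
        by (simp add: flip_sign_def)
    qed
  qed
  show ?thesis
  proof (intro equalityI subsetI)
    fix x assume "x \<in> (inversions n (flip_sign i \<sigma>) - inversions n \<sigma>) \<union>
        (inversions n \<sigma> - inversions n (flip_sign i \<sigma>))"
    then obtain a b where x: "x = (a, b)" "a \<in> {1..n}" "b \<in> {1..n}" "a < b"
        and "(flip_sign i \<sigma> a > flip_sign i \<sigma> b) \<noteq> (\<sigma> a > \<sigma> b)"
      by (auto simp: inversions_def)
    then have "(a = i \<and> \<bar>\<sigma> b\<bar> < \<bar>\<sigma> i\<bar>) \<or> (b = i \<and> \<bar>\<sigma> a\<bar> < \<bar>\<sigma> i\<bar>)"
      using changes by blast
    then show "x \<in> (\<lambda>j. (min i j, max i j)) ` {j \<in> {1..n}. nat \<bar>\<sigma> j\<bar> < nat \<bar>\<sigma> i\<bar>}"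
    proof
      assume "a = i \<and> \<bar>\<sigma> b\<bar> < \<bar>\<sigma> i\<bar>"
      with x show ?thesis
        by (intro image_eqI[where x = b]) auto
    next
      assume "b = i \<and> \<bar>\<sigma> a\<bar> < \<bar>\<sigma> i\<bar>"
      with x show ?thesis
        by (intro image_eqI[where x = a]) auto
    qed
  next
    fix x assume "x \<in> (\<lambda>j. (min i j, max i j)) ` {j \<in> {1..n}. nat \<bar>\<sigma> j\<bar> < nat \<bar>\<sigma> i\<bar>}"
    then obtain j where j: "j \<in> {1..n}" "\<bar>\<sigma> j\<bar> < \<bar>\<sigma> i\<bar>" "x = (min i j, max i j)"
      by auto
    then have "j \<noteq> i"
      by auto
    then show "x \<in> (inversions n (flip_sign i \<sigma>) - inversions n \<sigma>) \<union>
        (inversions n \<sigma> - inversions n (flip_sign i \<sigma>))"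
      using changes[of "min i j" "max i j"] i j by (auto simp: inversions_def min_def max_def)
  qed
qed

lemma card_add_card_eq_card_Int_sym_diff:
  assumes "finite A" "finite B"
  shows "card A + card B = 2 * card (A \<inter> B) + card ((A - B) \<union> (B - A))"
proof -
  have "card A = card (A \<inter> B) + card (A - B)" "card B = card (A \<inter> B) + card (B - A)"
    using card_Int_Diff[OF assms(1), of B] card_Int_Diff[OF assms(2), of A]
    by (simp_all add: Int_commute)
  moreover have "card ((A - B) \<union> (B - A)) = card (A - B) + card (B - A)"
    using assms by (subst card_Un_disjoint) auto
  ultimately show ?thesis
    by simp
qed

lemma inv_B_flip_sign:
  assumes \<sigma>: "\<sigma> \<in> signed_perms n" and i: "i \<in> {1..n}"
  shows "inv_B n (flip_sign i \<sigma>) + inv_B n \<sigma>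
    = 2 * card (inversions n (flip_sign i \<sigma>) \<inter> inversions n \<sigma>) + (nat \<bar>\<sigma> i\<bar> - 1)"
proof -
  let ?J = "{j \<in> {1..n}. nat \<bar>\<sigma> j\<bar> < nat \<bar>\<sigma> i\<bar>}"
  have "inj_on (\<lambda>j. (min i j, max i j)) ?J"
    by (rule inj_onI) (auto simp: min_def max_def split: if_splits)
  then have "card ((inversions n (flip_sign i \<sigma>) - inversions n \<sigma>) \<union>
      (inversions n \<sigma> - inversions n (flip_sign i \<sigma>))) = card ?J"
    unfolding inversions_flip_sign_sym_diff[OF \<sigma> i] by (rule card_image)
  also have "\<dots> = nat \<bar>\<sigma> i\<bar> - 1"
    by (rule card_abs_less[OF \<sigma> i])
  finally have "card ((inversions n (flip_sign i \<sigma>) - inversions n \<sigma>) \<union>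
      (inversions n \<sigma> - inversions n (flip_sign i \<sigma>))) = nat \<bar>\<sigma> i\<bar> - 1" .
  then show ?thesis
    by (simp add: inv_B_eq_card_inversions card_add_card_eq_card_Int_sym_diff finite_inversions)
qed

lemma sum_negative_flip_sign:
  fixes \<sigma> :: "nat \<Rightarrow> int"
  assumes "i \<in> {1..n}"
  shows "(\<Sum>j\<in>{j \<in> {1..n}. flip_sign i \<sigma> j < 0}. flip_sign i \<sigma> j)
    = (\<Sum>j\<in>{j \<in> {1..n}. \<sigma> j < 0}. \<sigma> j) - \<sigma> i"
proof -
  have negative_part: "(\<Sum>j\<in>{j \<in> {1..n}. \<rho> j < 0}. \<rho> j)
      = min (\<rho> i) 0 + (\<Sum>j\<in>{1..n} - {i}. min (\<rho> j) 0)" for \<rho> :: "nat \<Rightarrow> int"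
  proof -
    have "(\<Sum>j\<in>{j \<in> {1..n}. \<rho> j < 0}. \<rho> j) = (\<Sum>j\<in>{1..n}. if \<rho> j < 0 then \<rho> j else 0)"
      by (rule sum.inter_filter) simp
    also have "\<dots> = (\<Sum>j\<in>{1..n}. min (\<rho> j) 0)"
      by (rule sum.cong) (auto simp: min_def)
    also have "\<dots> = min (\<rho> i) 0 + (\<Sum>j\<in>{1..n} - {i}. min (\<rho> j) 0)"
      using assms by (simp add: sum.remove)
    finally show ?thesis .
  qed
  have "(\<Sum>j\<in>{1..n} - {i}. min (flip_sign i \<sigma> j) 0) = (\<Sum>j\<in>{1..n} - {i}. min (\<sigma> j) 0)"
    by (rule sum.cong) (simp_all add: flip_sign_def)
  moreover have "min (flip_sign i \<sigma> i) 0 = min (\<sigma> i) 0 - \<sigma> i"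
    by (simp add: flip_sign_def min_def)
  ultimately show ?thesis
    unfolding negative_part by simp
qed

lemma odd_length_B_flip_sign_add:
  assumes \<sigma>: "\<sigma> \<in> signed_perms n" and i: "i \<in> {1..n}"
  shows "odd (length_B n (flip_sign i \<sigma>) + length_B n \<sigma>)"
proof -
  define c where "c = card (inversions n (flip_sign i \<sigma>) \<inter> inversions n \<sigma>)"
  define neg where "neg = (\<Sum>j\<in>{j \<in> {1..n}. \<sigma> j < 0}. \<sigma> j)"
  have "\<sigma> i \<noteq> 0"
    using signed_perms_nonzero[OF \<sigma> i] .
  then have "int (inv_B n (flip_sign i \<sigma>)) + int (inv_B n \<sigma>) = 2 * int c + \<bar>\<sigma> i\<bar> - 1"
    using inv_B_flip_sign[OF \<sigma> i] unfolding c_def by linarith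
  moreover have "length_B n (flip_sign i \<sigma>) = int (inv_B n (flip_sign i \<sigma>)) - neg + \<sigma> i"
    unfolding length_B_def sum_negative_flip_sign[OF i] neg_def by simp
  moreover have "length_B n \<sigma> = int (inv_B n \<sigma>) - neg"
    by (simp add: length_B_def neg_def)
  ultimately have "length_B n (flip_sign i \<sigma>) + length_B n \<sigma>
      = 2 * (int c - neg) + (\<bar>\<sigma> i\<bar> + \<sigma> i) - 1"
    by (simp add: algebra_simps)
  moreover have "even (\<bar>\<sigma> i\<bar> + \<sigma> i)"
    by (cases "\<sigma> i < 0") simp_all
  ultimately show ?thesis
    by simp
qed

lemma even_length_B_flip_sign_iff:
  assumes "\<sigma> \<in> signed_perms n" "i \<in> {1..n}"
  shows "even (length_B n (flip_sign i \<sigma>)) \<longleftrightarrow> odd (length_B n \<sigma>)"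
  using odd_length_B_flip_sign_add[OF assms] by simp

lemma flip_sign_in_signed_perms_on:
  assumes \<sigma>: "\<sigma> \<in> signed_perms_on n S" and i: "i \<in> S" and S: "S \<subseteq> {1..n}"
  shows "flip_sign i \<sigma> \<in> signed_perms_on n S"
proof -
  have "flip_sign i \<sigma> \<in> signed_perms n"
    using \<sigma> i S flip_sign_in_signed_perms[of \<sigma> n i] by (auto simp: signed_perms_on_def)
  moreover have "moved_points n (flip_sign i \<sigma>) \<subseteq> moved_points n \<sigma> \<union> {i}"
    by (auto simp: moved_points_def flip_sign_def)
  ultimately show ?thesis
    using \<sigma> i by (auto simp: signed_perms_on_def)
qed

definition even_signed_perms_on :: "nat \<Rightarrow> nat set \<Rightarrow> (nat \<Rightarrow> int) set" where
  "even_signed_perms_on n S = {\<sigma> \<in> signed_perms_on n S. even (length_B n \<sigma>)}"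

lemma card_even_signed_perms_on_nonempty:
  assumes S: "S \<subseteq> {1..n}" and i: "i \<in> S"
  shows "2 * card (even_signed_perms_on n S) = card (signed_perms_on n S)"
proof -
  define odd_perms where "odd_perms = {\<sigma> \<in> signed_perms_on n S. odd (length_B n \<sigma>)}"
  have flip_even_iff: "even (length_B n (flip_sign i \<sigma>)) \<longleftrightarrow> odd (length_B n \<sigma>)"
    if "\<sigma> \<in> signed_perms_on n S" for \<sigma>
    using that i S by (intro even_length_B_flip_sign_iff) (auto simp: signed_perms_on_def)
  have to_odd: "flip_sign i \<sigma> \<in> odd_perms" if "\<sigma> \<in> even_signed_perms_on n S" for \<sigma>
    using that flip_sign_in_signed_perms_on[OF _ i S] flip_even_iff
    by (simp add: even_signed_perms_on_def odd_perms_def)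
  have to_even: "flip_sign i \<sigma> \<in> even_signed_perms_on n S" if "\<sigma> \<in> odd_perms" for \<sigma>
    using that flip_sign_in_signed_perms_on[OF _ i S] flip_even_iff
    by (simp add: even_signed_perms_on_def odd_perms_def)
  have "bij_betw (flip_sign i) (even_signed_perms_on n S) odd_perms"
    by (rule bij_betw_byWitness[where f' = "flip_sign i"])
      (simp_all add: image_subset_iff to_odd to_even)
  then have "card (even_signed_perms_on n S) = card odd_perms"
    by (rule bij_betw_same_card)
  moreover have "card (signed_perms_on n S) = card (even_signed_perms_on n S) + card odd_perms"
  proof -
    have "finite (signed_perms_on n S)"
      using finite_signed_perms by (simp add: signed_perms_on_def)
    then have "finite (even_signed_perms_on n S)" "finite odd_perms"
      by (simp_all add: even_signed_perms_on_def odd_perms_def)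
    moreover have "signed_perms_on n S = even_signed_perms_on n S \<union> odd_perms"
      by (auto simp: even_signed_perms_on_def odd_perms_def)
    moreover have "even_signed_perms_on n S \<inter> odd_perms = {}"
      by (auto simp: even_signed_perms_on_def odd_perms_def)
    ultimately show ?thesis
      by (simp add: card_Un_disjoint)
  qed
  ultimately show ?thesis
    by simp
qed

lemma even_signed_perms_on_empty: "even_signed_perms_on n {} = signed_perms_on n {}"
proof -
  have "length_B n \<sigma> = 0" if "\<sigma> \<in> signed_perms_on n {}" for \<sigma>
  proof -
    have "\<sigma> i = int i" if "i \<in> {1..n}" for i
      using \<open>\<sigma> \<in> signed_perms_on n {}\<close> that by (auto simp: signed_perms_on_def moved_points_def)
    then have "inversions n \<sigma> = {}" and no_negative: "{i \<in> {1..n}. \<sigma> i < 0} = {}"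
      by (auto simp: inversions_def)
    then show ?thesis
      unfolding length_B_def inv_B_eq_card_inversions no_negative by simp
  qed
  then show ?thesis
    by (auto simp: even_signed_perms_on_def)
qed

text \<open>For \<open>S = {}\<close> the truncated subtraction makes the right-hand side \<open>2\<^sup>0 * 0! = 1\<close>.\<close>
lemma card_even_signed_perms_on:
  assumes "S \<subseteq> {1..n}"
  shows "card (even_signed_perms_on n S) = 2 ^ (card S - 1) * fact (card S)"
proof (cases "S = {}")
  case True
  then show ?thesis
    using card_signed_perms_on[of "{}" n] by (simp add: even_signed_perms_on_empty)
next
  case False
  then obtain i where "i \<in> S"
    by blast
  moreover have "card S > 0"
    using False finite_subset[OF assms] by (simp add: card_gt_0_iff)
  ultimately show ?thesis
    using card_even_signed_perms_on_nonempty[OF assms] card_signed_perms_on[OF assms]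
    by (simp add: power_eq_if)
qed

definition even_signed_perms_moving :: "nat \<Rightarrow> nat set \<Rightarrow> (nat \<Rightarrow> int) set" where
  "even_signed_perms_moving n T =
     {\<sigma> \<in> signed_perms n. even (length_B n \<sigma>) \<and> moved_points n \<sigma> = T}"

lemma card_even_signed_perms_on_eq_sum:
  assumes "finite S"
  shows "card (even_signed_perms_on n S) = (\<Sum>T\<in>Pow S. card (even_signed_perms_moving n T))"
proof -
  have "even_signed_perms_on n S = (\<Union>T\<in>Pow S. even_signed_perms_moving n T)"
    by (auto simp: even_signed_perms_on_def signed_perms_on_def even_signed_perms_moving_def)
  moreover have "finite (even_signed_perms_moving n T)" for T
    using finite_signed_perms by (simp add: even_signed_perms_moving_def)
  ultimately show ?thesis
    using assms by (simp add: card_UN_disjoint even_signed_perms_moving_def disjoint_iff)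
qed

lemma sum_Pow_card:
  fixes f :: "nat \<Rightarrow> 'a :: comm_semiring_1"
  assumes "finite A"
  shows "(\<Sum>T\<in>Pow A. f (card T)) = (\<Sum>k=0..card A. of_nat (card A choose k) * f k)"
proof -
  have "(\<Sum>T\<in>Pow A. f (card T)) = (\<Sum>k=0..card A. \<Sum>T\<in>{T \<in> Pow A. card T = k}. f (card T))"
    using assms by (intro sum.group[symmetric]) (auto simp: card_mono)
  also have "\<dots> = (\<Sum>k=0..card A. of_nat (card A choose k) * f k)"
    using n_subsets[OF assms] by (intro sum.cong) simp_all
  finally show ?thesis .
qed

lemma signed_derangement_iff_moved_points:
  "signed_derangement n \<sigma> \<longleftrightarrow> moved_points n \<sigma> = {1..n}"
  by (auto simp: signed_derangement_def moved_points_def)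

lemma dAB_eq_binomial_sum:
  "int (dAB n) = (\<Sum>k=0..n. int (n choose k) * (-1) ^ (n - k) * (2 ^ (k - 1) * fact k))"
proof -
  let ?f = "\<lambda>T. int (card (even_signed_perms_moving n T))"
  have "int (dAB n) = ?f {1..n}"
    unfolding dAB_def even_signed_perms_moving_def signed_derangement_iff_moved_points
    by (simp add: conj_commute)
  also have "\<dots> = (\<Sum>T\<in>Pow {1..n}. (-1) ^ (card {1..n} - card T) * sum ?f (Pow T))"
    by (rule inclusion_exclusion_mobius) simp_all
  also have "\<dots> = (\<Sum>T\<in>Pow {1..n}. (-1) ^ (n - card T) * (2 ^ (card T - 1) * fact (card T)))"
  proof (rule sum.cong)
    fix T assume "T \<in> Pow {1..n}"
    then have T: "T \<subseteq> {1..n}"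
      by simp
    then have "finite T"
      using finite_subset by blast
    have "sum ?f (Pow T) = int (card (even_signed_perms_on n T))"
      by (simp add: card_even_signed_perms_on_eq_sum[OF \<open>finite T\<close>])
    also have "\<dots> = 2 ^ (card T - 1) * fact (card T)"
      by (simp add: card_even_signed_perms_on[OF T])
    finally have "sum ?f (Pow T) = 2 ^ (card T - 1) * fact (card T)" .
    then show "(-1) ^ (card {1..n} - card T) * sum ?f (Pow T)
        = (-1) ^ (n - card T) * (2 ^ (card T - 1) * fact (card T))"
      by simp
  qed simp
  also have "\<dots> = (\<Sum>k=0..n. int (n choose k) * (-1) ^ (n - k) * (2 ^ (k - 1) * fact k))"
    using sum_Pow_card[of "{1..n}" "\<lambda>k. (-1) ^ (n - k) * (2 ^ (k - 1) * fact k) :: int"]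
    by (simp add: mult.assoc)
  finally show ?thesis .
qed

lemma dAB_closed_form:
  assumes "n \<ge> 1"
  shows "real (dAB n) = fact n * (\<Sum>k=0..n-1. 2 ^ (n - k - 1) * (-1) ^ k / fact k) + (-1) ^ n"
proof -
  let ?t = "\<lambda>k. real (n choose k) * (-1) ^ (n - k) * (2 ^ (k - 1) * fact k)"
  have "real (dAB n) = (\<Sum>k=0..n. ?t k)"
    using arg_cong[OF dAB_eq_binomial_sum, of "real_of_int" n] by simp
  also have "\<dots> = (-1) ^ n + (\<Sum>k=1..n. ?t k)"
    by (simp add: sum.atLeast_Suc_atMost)
  also have "(\<Sum>k=1..n. ?t k) = (\<Sum>j=0..n-1. fact n * (2 ^ (n - j - 1) * (-1) ^ j / fact j))"
  proof (rule sum.reindex_bij_witness[where j = "\<lambda>k. n - k" and i = "\<lambda>j. n - j"])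
    fix k assume "k \<in> {1..n}"
    then have "k \<le> n" "n - (n - k) = k"
      by auto
    then show "fact n * (2 ^ (n - (n - k) - 1) * (-1) ^ (n - k) / fact (n - k)) = ?t k"
      by (simp add: binomial_fact field_simps)
  qed (use assms in auto)
  finally show ?thesis
    by (simp add: sum_distrib_left)
qed

lemma real_dAB_Suc:
  assumes "n \<ge> 1"
  shows "real (dAB (Suc n)) = 2 * real (Suc n) * real (dAB n) + (-1) ^ Suc n * (real (Suc n) + 1)"
proof -
  define s where "s m = (\<Sum>k=0..m-1. 2 ^ (m - k - 1) * (-1) ^ k / fact k :: real)" for m
  have "s (Suc n) = (\<Sum>k=0..n-1. 2 ^ (n - k) * (-1) ^ k / fact k) + (-1) ^ n / fact n"
    using assms by (cases n) (simp_all add: s_def)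
  also have "(\<Sum>k=0..n-1. 2 ^ (n - k) * (-1) ^ k / fact k) = 2 * s n"
    unfolding s_def sum_distrib_left using assms
    by (intro sum.cong) (auto simp flip: power_Suc simp: Suc_diff_le)
  finally have s_Suc: "s (Suc n) = 2 * s n + (-1) ^ n / fact n" .
  have "real (dAB (Suc n)) = fact (Suc n) * s (Suc n) + (-1) ^ Suc n"
    using dAB_closed_form[of "Suc n"] by (simp add: s_def)
  also have "fact (Suc n) * s (Suc n) = 2 * real (Suc n) * (fact n * s n) + real (Suc n) * (-1) ^ n"
    by (simp add: s_Suc field_simps)
  also have "fact n * s n = real (dAB n) - (-1) ^ n"
    using dAB_closed_form[OF assms] by (simp add: s_def)
  finally show ?thesis
    by (simp add: algebra_simps)
qed

lemma dAB_recurrence: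
  assumes "n \<ge> 2"
  shows "int (dAB n) = 2 * int n * int (dAB (n - 1)) + (-1) ^ n * (int n + 1)"
proof -
  define m where "m = n - 1"
  have "n = Suc m" "m \<ge> 1"
    using assms by (simp_all add: m_def)
  then have "real_of_int (int (dAB n))
      = real_of_int (2 * int n * int (dAB (n - 1)) + (-1) ^ n * (int n + 1))"
    using real_dAB_Suc[of m] by simp
  then show ?thesis
    by (simp only: of_int_eq_iff)
qed

lemma dAB_one: "dAB 1 = 0"
  using dAB_closed_form[of 1] by simp

lemma dAB_two: "dAB 2 = 3"
  using dAB_closed_form[of 2] by (simp add: numeral_2_eq_2)

lemma dAB_recurrence_second_order:
  assumes "n \<ge> 3"
  shows "int (dAB n) = (int n - 1) * (2 * int (dAB (n - 1)) + 4 * int (dAB (n - 2)) + (-1) ^ (n - 1))"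
proof -
  obtain m where n: "n = 3 + m"
    using le_Suc_ex[OF assms] by blast
  have "int (dAB n) = 2 * int n * int (dAB (n - 1)) + (-1) ^ n * (int n + 1)"
    using dAB_recurrence assms by simp
  moreover have "int (dAB (n - 1)) = 2 * (int n - 1) * int (dAB (n - 2)) + (-1) ^ (n - 1) * int n"
    using dAB_recurrence[of "n - 1"] by (simp add: n)
  ultimately show ?thesis
    by (simp add: n algebra_simps power_add)
qed

theorem theorem1p2:
  shows "(\<forall>n\<ge>1. real (dAB n) =
            fact n * (\<Sum>k=0..n-1. 2 ^ (n - k - 1) * (-1) ^ k / fact k) + (-1) ^ n)
       \<and> (\<forall>n\<ge>2. int (dAB n) = 2 * int n * int (dAB (n - 1)) + (-1) ^ n * (int n + 1))
       \<and> dAB 1 = 0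
       \<and> (\<forall>n\<ge>3. int (dAB n) = (int n - 1) *
            (2 * int (dAB (n - 1)) + 4 * int (dAB (n - 2)) + (-1) ^ (n - 1)))
       \<and> dAB 2 = 3"
  using dAB_closed_form dAB_recurrence dAB_one dAB_recurrence_second_order dAB_two by blast

end
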